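(* Let $R\in\mathbb R$ and let $f:[0,R)\to\mathbb R$ be continuously differentiable and satisfy (h1) $f(0)>0$, $f'(0)=-1$; (h2) $f'$ is strictly increasing and convex; (h3) $f(t)<0$ for some $t\in(0,R)$. Let $e_f(v,t):=f(v)-[f(t)+f'(t)(v-t)]$ for $t,v\in[0,R)$. If $0\le b\le t$, $0\le a\le s$ and $t+s<R$, then \[e_f(a+b,b)\le e_f(t+s,t),\] and, if $s\neq0$, \[e_f(a+b,b)\le\frac12\,\frac{f'(t+s)-f'(t)}{s}\,a^2.\] *)

theory Defs
  imports "HOL-Analysis.Analysis"
begin

definition lin_err :: "(real \<Rightarrow> real) \<Rightarrow> (real \<Rightarrow> real) \<Rightarrow> real \<Rightarrow> real \<Rightarrow> real" where
  "lin_err f f' v t = f v - (f t + f' t * (v - t))"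

end

theory Submission
  imports Defs
begin

text \<open>Write \<open>k\<^sub>c(x) = e\<^sub>f(c + x, c)\<close>, so that \<open>k\<^sub>c(0) = 0\<close> and \<open>k\<^sub>c'(x) = f'(c + x) - f'(c)\<close>.
  Each inequality compares the derivatives of two functions vanishing at 0: monotonicity
  of \<open>f'\<close> makes \<open>k\<^sub>b\<close> nondecreasing, so \<open>k\<^sub>b(a) \<le> k\<^sub>b(s)\<close>; convexity of \<open>f'\<close> makes its
  increments over a fixed length grow with the base point, so \<open>k\<^sub>b' \<le> k\<^sub>t'\<close>; and it bounds
  \<open>k\<^sub>b'(x)\<close> by \<open>x\<close> times the chord slope of \<open>f'\<close> on \<open>[t, t + s]\<close>, which integrates to the
  quadratic bound.\<close>

lemma convex_on_slope_mono:
  fixes g :: "real \<Rightarrow> real"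
  assumes cvx: "convex_on I g" and I: "p \<in> I" "q \<in> I" "p' \<in> I" "q' \<in> I"
    and "p < q" "p' < q'" "p \<le> p'" "q \<le> q'"
  shows "(g q - g p) / (q - p) \<le> (g q' - g p') / (q' - p')"
proof -
  have slope_sym: "(u - v) / (w - z) = (v - u) / (z - w)" for u v w z :: real
    by (metis minus_diff_eq minus_divide_divide)
  have "(g q - g p) / (q - p) \<le> (g q' - g p) / (q' - p)"
  proof (cases "q = q'")
    case False
    with assms have "q < q'" by simp
    from convex_on_slope_le(1)[OF cvx I(1,4) \<open>p < q\<close> this] show ?thesis
      by (simp add: slope_sym)
  qed simp
  also have "\<dots> \<le> (g q' - g p') / (q' - p')"
  proof (cases "p = p'")
    case False
    with assms have "p < p'" by simp
    from convex_on_slope_le(2)[OF cvx I(1,4) this \<open>p' < q'\<close>] show ?thesis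
      by (simp add: slope_sym)
  qed simp
  finally show ?thesis .
qed

lemma convex_on_increment_mono:
  fixes g :: "real \<Rightarrow> real"
  assumes "convex_on I g" "b \<in> I" "b + x \<in> I" "t \<in> I" "t + x \<in> I" "b \<le> t" "0 < x"
  shows "g (b + x) - g b \<le> g (t + x) - g t"
proof -
  have "(g (b + x) - g b) / (b + x - b) \<le> (g (t + x) - g t) / (t + x - t)"
    by (rule convex_on_slope_mono) (use assms in auto)
  with \<open>0 < x\<close> show ?thesis by (simp add: divide_le_cancel)
qed

lemma convex_on_increment_le_slope:
  fixes g :: "real \<Rightarrow> real"
  assumes "convex_on I g" "b \<in> I" "b + x \<in> I" "t \<in> I" "t + s \<in> I"
    and "b \<le> t" "0 < x" "x \<le> s"
  shows "g (b + x) - g b \<le> (g (t + s) - g t) / s * x"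
proof -
  have "(g (b + x) - g b) / (b + x - b) \<le> (g (t + s) - g t) / (t + s - t)"
    by (rule convex_on_slope_mono) (use assms in auto)
  with \<open>0 < x\<close> show ?thesis by (simp add: divide_le_eq mult.commute)
qed

lemma lin_err_shift_has_derivative:
  assumes "(f has_real_derivative f' (c + x)) (at (c + x))"
  shows "((\<lambda>x. lin_err f f' (c + x) c) has_real_derivative f' (c + x) - f' c) (at x)"
proof -
  have "((\<lambda>x. f (c + x)) has_real_derivative f' (c + x) * 1) (at x)"
    by (rule DERIV_chain2[where g="\<lambda>x. c + x", OF assms]) (auto intro!: derivative_eq_intros)
  then show ?thesis
    unfolding lin_err_def by (auto intro!: derivative_eq_intros)
qed

lemma continuous_on_lin_err_shift:
  assumes "continuous_on {c + u..c + v} f"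
  shows "continuous_on {u..v} (\<lambda>x. lin_err f f' (c + x) c)"
proof -
  have "continuous_on {u..v} (\<lambda>x. f (c + x))"
    by (rule continuous_on_compose2[OF assms]) (auto intro!: continuous_intros)
  then show ?thesis
    unfolding lin_err_def by (auto intro!: continuous_intros)
qed

lemma lin_err_shift_mono:
  assumes "0 \<le> a" "a \<le> s"
    and deriv: "\<And>x. c < x \<Longrightarrow> x < c + s \<Longrightarrow> (f has_real_derivative f' x) (at x)"
    and mono: "\<And>x. c < x \<Longrightarrow> x < c + s \<Longrightarrow> f' c \<le> f' x"
    and cont: "continuous_on {c..c + s} f"
  shows "lin_err f f' (c + a) c \<le> lin_err f f' (c + s) c"
proof (rule DERIV_nonneg_imp_increasing_open[OF \<open>a \<le> s\<close>])
  fix x assume "a < x" "x < s"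
  with assms have "((\<lambda>x. lin_err f f' (c + x) c) has_real_derivative f' (c + x) - f' c) (at x)"
    by (intro lin_err_shift_has_derivative) auto
  with assms \<open>a < x\<close> \<open>x < s\<close>
  show "\<exists>y. ((\<lambda>x. lin_err f f' (c + x) c) has_real_derivative y) (at x) \<and> 0 \<le> y"
    by auto
next
  have "continuous_on {c + a..c + s} f"
    by (rule continuous_on_subset[OF cont]) (use \<open>0 \<le> a\<close> in auto)
  then show "continuous_on {a..s} (\<lambda>x. lin_err f f' (c + x) c)"
    by (rule continuous_on_lin_err_shift)
qed

lemma lin_err_le_lin_err_of_increment_le:
  assumes "0 \<le> s"
    and deriv: "\<And>x. 0 < x \<Longrightarrow> x < s \<Longrightarrow>
      (f has_real_derivative f' (b + x)) (at (b + x)) \<and> (f has_real_derivative f' (t + x)) (at (t + x))"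
    and cont: "continuous_on {b..b + s} f" "continuous_on {t..t + s} f"
    and incr: "\<And>x. 0 < x \<Longrightarrow> x < s \<Longrightarrow> f' (b + x) - f' b \<le> f' (t + x) - f' t"
  shows "lin_err f f' (b + s) b \<le> lin_err f f' (t + s) t"
proof -
  let ?h = "\<lambda>x. lin_err f f' (t + x) t - lin_err f f' (b + x) b"
  have "?h 0 \<le> ?h s"
  proof (rule DERIV_nonneg_imp_increasing_open[OF \<open>0 \<le> s\<close>])
    fix x assume x: "0 < x" "x < s"
    have "(?h has_real_derivative (f' (t + x) - f' t) - (f' (b + x) - f' b)) (at x)"
      using deriv[OF x] by (intro DERIV_diff lin_err_shift_has_derivative) auto
    with incr[OF x] show "\<exists>y. (?h has_real_derivative y) (at x) \<and> 0 \<le> y"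
      by auto
  next
    show "continuous_on {0..s} ?h"
      using cont by (intro continuous_on_diff continuous_on_lin_err_shift) auto
  qed
  then show ?thesis by (simp add: lin_err_def)
qed

lemma lin_err_le_quadratic:
  assumes "0 \<le> a"
    and deriv: "\<And>x. 0 < x \<Longrightarrow> x < a \<Longrightarrow> (f has_real_derivative f' (b + x)) (at (b + x))"
    and cont: "continuous_on {b..b + a} f"
    and incr: "\<And>x. 0 < x \<Longrightarrow> x < a \<Longrightarrow> f' (b + x) - f' b \<le> K * x"
  shows "lin_err f f' (b + a) b \<le> 1 / 2 * K * a\<^sup>2"
proof -
  let ?h = "\<lambda>x. 1 / 2 * K * x\<^sup>2 - lin_err f f' (b + x) b"
  have "?h 0 \<le> ?h a"
  proof (rule DERIV_nonneg_imp_increasing_open[OF \<open>0 \<le> a\<close>])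
    fix x assume x: "0 < x" "x < a"
    have "(?h has_real_derivative 1 / 2 * K * (2 * x) - (f' (b + x) - f' b)) (at x)"
      using lin_err_shift_has_derivative[where f=f and f'=f' and c=b and x=x, OF deriv[OF x]]
      by (auto intro!: derivative_eq_intros)
    with incr[OF x] show "\<exists>y. (?h has_real_derivative y) (at x) \<and> 0 \<le> y"
      by auto
  next
    show "continuous_on {0..a} ?h"
      using cont by (intro continuous_intros continuous_on_lin_err_shift) auto
  qed
  then show ?thesis by (simp add: lin_err_def)
qed

theorem lemma3p3:
  fixes f f' :: "real \<Rightarrow> real" and R a b s t :: real
  assumes deriv: "\<And>x. x \<in> {0..<R} \<Longrightarrow> (f has_real_derivative f' x) (at x within {0..<R})"
    and cont: "continuous_on {0..<R} f'"
    and h1: "f 0 > 0" "f' 0 = -1"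
    and h2: "strict_mono_on {0..<R} f'" "convex_on {0..<R} f'"
    and h3: "\<exists>x\<in>{0<..<R}. f x < 0"
    and b: "0 \<le> b" "b \<le> t"
    and a: "0 \<le> a" "a \<le> s"
    and ts: "t + s < R"
  shows "lin_err f f' (a + b) b \<le> lin_err f f' (t + s) t
         \<and> (s \<noteq> 0 \<longrightarrow> lin_err f f' (a + b) b \<le> (1/2) * ((f' (t + s) - f' t) / s) * a\<^sup>2)"
proof -
  have deriv_at: "(f has_real_derivative f' x) (at x)" if "0 < x" "x < R" for x
    using deriv[of x] that at_within_interior[of x "{0..<R}"] by auto
  have cont_f: "continuous_on {u..v} f" if "0 \<le> u" "v < R" for u v
  proof (rule continuous_on_subset)
    show "continuous_on {0..<R} f"
      using deriv DERIV_continuous continuous_on_eq_continuous_within by blast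
  qed (use that in auto)
  have "lin_err f f' (b + a) b \<le> lin_err f f' (b + s) b"
    using a b ts deriv_at cont_f strict_mono_on_leD[OF h2(1)]
    by (intro lin_err_shift_mono) auto
  also have "\<dots> \<le> lin_err f f' (t + s) t"
    using a b ts deriv_at cont_f
    by (intro lin_err_le_lin_err_of_increment_le convex_on_increment_mono[OF h2(2)]) auto
  finally have "lin_err f f' (b + a) b \<le> lin_err f f' (t + s) t" .
  moreover have "lin_err f f' (b + a) b \<le> 1 / 2 * ((f' (t + s) - f' t) / s) * a\<^sup>2" if "s \<noteq> 0"
    using a b ts that deriv_at cont_f
    by (intro lin_err_le_quadratic convex_on_increment_le_slope[OF h2(2)]) auto
  ultimately show ?thesis
    by (simp add: add.commute)
qed

end
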